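(* Let $A=[a_{ij}]\in\mathcal{M}_3(\mathbb{H})$ be a strictly upper triangular (hence nilpotent) matrix. Then $W(A)$ is convex if and only if $a_{13}^*a_{12}a_{23}\in\mathbb{R}$.
   Context: $\mathbb{H}$ denotes the real quaternions with conjugation $q\mapsto q^*$, and $\mathbb{R}\subset\mathbb{H}$ as the real multiples of $1$. The numerical range of $A\in\mathcal{M}_n(\mathbb{H})$ is $W(A)=\{\mathbf{x}^*A\mathbf{x}:\mathbf{x}\in\mathbb{H}^n,\ \mathbf{x}^*\mathbf{x}=1\}$, with $\mathbf{x}^*$ the conjugate transpose. *)

theory Defs
  imports "HOL-Analysis.Analysis"
begin

codatatype quat = Quat (Re: real) (Im1: real) (Im2: real) (Im3: real)

lemma quat_eqI [intro?]:
  "\<lbrakk>Re x = Re y; Im1 x = Im1 y; Im2 x = Im2 y; Im3 x = Im3 y\<rbrakk> \<Longrightarrow> x = y"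
  by (cases x, cases y) simp

lemma quat_eq_iff: "x = y \<longleftrightarrow> Re x = Re y \<and> Im1 x = Im1 y \<and> Im2 x = Im2 y \<and> Im3 x = Im3 y"
  by (auto intro: quat_eqI)

instantiation quat :: ab_group_add
begin
primcorec zero_quat where "Re 0 = 0" | "Im1 0 = 0" | "Im2 0 = 0" | "Im3 0 = 0"
primcorec plus_quat where
  "Re (x + y) = Re x + Re y" | "Im1 (x + y) = Im1 x + Im1 y"
| "Im2 (x + y) = Im2 x + Im2 y" | "Im3 (x + y) = Im3 x + Im3 y"
primcorec uminus_quat where
  "Re (- x) = - Re x" | "Im1 (- x) = - Im1 x" | "Im2 (- x) = - Im2 x" | "Im3 (- x) = - Im3 x"
primcorec minus_quat where
  "Re (x - y) = Re x - Re y" | "Im1 (x - y) = Im1 x - Im1 y"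
| "Im2 (x - y) = Im2 x - Im2 y" | "Im3 (x - y) = Im3 x - Im3 y"
instance by standard (simp_all add: quat_eq_iff)
end

instantiation quat :: ring_1
begin
primcorec one_quat where "Re 1 = 1" | "Im1 1 = 0" | "Im2 1 = 0" | "Im3 1 = 0"
primcorec times_quat where
  "Re (x * y) = Re x * Re y - Im1 x * Im1 y - Im2 x * Im2 y - Im3 x * Im3 y"
| "Im1 (x * y) = Re x * Im1 y + Im1 x * Re y + Im2 x * Im3 y - Im3 x * Im2 y"
| "Im2 (x * y) = Re x * Im2 y - Im1 x * Im3 y + Im2 x * Re y + Im3 x * Im1 y"
| "Im3 (x * y) = Re x * Im3 y + Im1 x * Im2 y - Im2 x * Im1 y + Im3 x * Re y"
instance by standard (simp_all add: quat_eq_iff algebra_simps)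
end

instantiation quat :: real_algebra_1
begin
primcorec scaleR_quat where
  "Re (scaleR r x) = r * Re x" | "Im1 (scaleR r x) = r * Im1 x"
| "Im2 (scaleR r x) = r * Im2 x" | "Im3 (scaleR r x) = r * Im3 x"
instance by standard (simp_all add: quat_eq_iff algebra_simps)
end

primcorec qcnj :: "quat \<Rightarrow> quat" where
  "Re (qcnj x) = Re x" | "Im1 (qcnj x) = - Im1 x" | "Im2 (qcnj x) = - Im2 x" | "Im3 (qcnj x) = - Im3 x"

text \<open>A matrix in \<open>M_3(H)\<close> is represented as \<open>A :: nat \<Rightarrow> nat \<Rightarrow> quat\<close>,
  with entries \<open>A i j\<close> for \<open>i, j \<in> {1..3}\<close> (other values are irrelevant);
  vectors in \<open>H^3\<close> as \<open>x :: nat \<Rightarrow> quat\<close> with components \<open>x i\<close>, \<open>i \<in> {1..3}\<close>.\<close>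

definition numrange3 :: "(nat \<Rightarrow> nat \<Rightarrow> quat) \<Rightarrow> quat set" where
  "numrange3 A = {(\<Sum>i\<in>{1..3}. \<Sum>j\<in>{1..3}. qcnj (x i) * A i j * x j) | x.
      (\<Sum>i\<in>{1..3}. qcnj (x i) * x i) = 1}"

definition strictly_upper_triangular3 :: "(nat \<Rightarrow> nat \<Rightarrow> quat) \<Rightarrow> bool" where
  "strictly_upper_triangular3 A \<longleftrightarrow> (\<forall>i\<in>{1..3}. \<forall>j\<in>{1..3}. j \<le> i \<longrightarrow> A i j = 0)"

end

theory Submission
  imports Defs
begin

text \<open>Write \<open>a, b, c\<close> for \<open>a\<^sub>1\<^sub>2, a\<^sub>1\<^sub>3, a\<^sub>2\<^sub>3\<close>. The numerical range is invariant under diagonal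
  unitary similarity and under \<open>w \<mapsto> q\<^sup>* w q / |q|\<^sup>2\<close>, which rotates \<open>Im w\<close>. If \<open>b\<^sup>*ac\<close> is real, a
  diagonal unitary similarity makes \<open>a, b, c\<close> real; then \<open>w \<in> W(A)\<close> iff \<open>Re w + i|Im w|\<close> lies in the
  complex numerical range of the same real matrix, which is convex (Toeplitz--Hausdorff) and closed
  under conjugation, and therefore \<open>W(A)\<close> is convex. Conversely, if \<open>W(A)\<close> is convex, averaging two
  rotated copies of a maximiser of \<open>Re\<close> shows that \<open>l = max Re W(A)\<close> itself lies in \<open>W(A)\<close>. A unit
  vector \<open>x\<close> with \<open>x\<^sup>*Ax = l\<close> maximises \<open>Re x\<^sup>*Ax\<close>, so it is an eigenvector of \<open>A + A\<^sup>*\<close> for \<open>2l\<close>,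
  and these eigen-equations together with the reality of \<open>x\<^sup>*Ax\<close> force \<open>b\<^sup>*ac\<close> to be real.\<close>

section \<open>Quaternion arithmetic\<close>

lemma quat_of_real_simps [simp]:
  "quat.Re (of_real r) = r" "Im1 (of_real r) = 0" "Im2 (of_real r) = 0" "Im3 (of_real r) = 0"
  by (simp_all add: of_real_def)

lemma qcnj_qcnj [simp]: "qcnj (qcnj a) = a"
  by (simp add: quat_eq_iff)

lemma qcnj_one [simp]: "qcnj 1 = 1"
  by (simp add: quat_eq_iff)

lemma qcnj_minus: "qcnj (- a) = - qcnj a"
  by (simp add: quat_eq_iff)

lemma qcnj_add: "qcnj (a + b) = qcnj a + qcnj b"
  by (simp add: quat_eq_iff)

lemma qcnj_mult: "qcnj (a * b) = qcnj b * qcnj a"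
  by (simp add: quat_eq_iff algebra_simps)

lemma qcnj_scaleR: "qcnj (r *\<^sub>R a) = r *\<^sub>R qcnj a"
  by (simp add: quat_eq_iff)

definition qnorm2 :: "quat \<Rightarrow> real" where
  "qnorm2 q = (quat.Re q)\<^sup>2 + (Im1 q)\<^sup>2 + (Im2 q)\<^sup>2 + (Im3 q)\<^sup>2"

lemma qcnj_mult_self: "qcnj q * q = of_real (qnorm2 q)"
  by (simp add: quat_eq_iff qnorm2_def power2_eq_square algebra_simps)

lemma mult_qcnj_self: "q * qcnj q = of_real (qnorm2 q)"
  by (simp add: quat_eq_iff qnorm2_def power2_eq_square algebra_simps)

lemma qnorm2_nonneg: "qnorm2 q \<ge> 0"
  by (simp add: qnorm2_def)

lemma qnorm2_eq_0_iff [simp]: "qnorm2 q = 0 \<longleftrightarrow> q = 0"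
  by (auto simp: qnorm2_def quat_eq_iff add_nonneg_eq_0_iff)

lemma qnorm2_pos_iff: "qnorm2 q > 0 \<longleftrightarrow> q \<noteq> 0"
  using qnorm2_nonneg[of q] qnorm2_eq_0_iff[of q] by linarith

lemma qnorm2_mult: "qnorm2 (x * y) = qnorm2 x * qnorm2 y"
  by (simp add: qnorm2_def power2_eq_square algebra_simps)

lemma qnorm2_scaleR: "qnorm2 (r *\<^sub>R q) = r\<^sup>2 * qnorm2 q"
  by (simp add: qnorm2_def power_mult_distrib algebra_simps)

lemma qnorm2_qcnj [simp]: "qnorm2 (qcnj q) = qnorm2 q"
  by (simp add: qnorm2_def)

lemma qcnj_eq_0_iff [simp]: "qcnj q = 0 \<longleftrightarrow> q = 0"
  by (metis qcnj_qcnj qnorm2_eq_0_iff qnorm2_qcnj)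

lemma qnorm2_0 [simp]: "qnorm2 0 = 0"
  by (simp add: qnorm2_def)

lemma qnorm2_one [simp]: "qnorm2 1 = 1"
  by (simp add: qnorm2_def)

instance quat :: ring_no_zero_divisors
proof
  fix x y :: quat
  assume "x \<noteq> 0" "y \<noteq> 0"
  then show "x * y \<noteq> 0"
    by (simp flip: qnorm2_eq_0_iff add: qnorm2_mult)
qed

lemma mult_qcnj_left: "x * (qcnj x * y) = qnorm2 x *\<^sub>R y"
  by (simp add: mult.assoc[symmetric] mult_qcnj_self scaleR_conv_of_real)

lemma quat_Reals_iff: "q \<in> \<real> \<longleftrightarrow> Im1 q = 0 \<and> Im2 q = 0 \<and> Im3 q = 0"
proof
  assume "q \<in> \<real>"
  then show "Im1 q = 0 \<and> Im2 q = 0 \<and> Im3 q = 0"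
    by (auto elim: Reals_cases)
next
  assume "Im1 q = 0 \<and> Im2 q = 0 \<and> Im3 q = 0"
  then have "q = of_real (quat.Re q)"
    by (simp add: quat_eq_iff)
  then show "q \<in> \<real>"
    by (metis Reals_of_real)
qed

lemma qcnj_Reals: "r \<in> \<real> \<Longrightarrow> qcnj r = r"
  by (simp add: quat_Reals_iff quat_eq_iff)

lemma of_real_quat_commute: "of_real r * q = q * (of_real r :: quat)"
  by (simp add: quat_eq_iff)

lemma Reals_quat_commute: "r \<in> \<real> \<Longrightarrow> r * q = q * (r :: quat)"
  by (auto simp: of_real_quat_commute elim!: Reals_cases)

lemma Reals_scaleR [simp]: "x \<in> \<real> \<Longrightarrow> r *\<^sub>R (x :: 'a::real_algebra_1) \<in> \<real>"
  by (simp add: scaleR_conv_of_real)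

lemma scaleR_in_Reals_iff:
  fixes x :: "'a::real_algebra_1"
  assumes "k \<noteq> 0"
  shows "k *\<^sub>R x \<in> \<real> \<longleftrightarrow> x \<in> \<real>"
proof
  assume "k *\<^sub>R x \<in> \<real>"
  then have "(1 / k) *\<^sub>R k *\<^sub>R x \<in> \<real>"
    by (rule Reals_scaleR)
  with assms show "x \<in> \<real>"
    by simp
qed simp

lemma qcnj_conj_in_Reals: "p \<in> \<real> \<Longrightarrow> qcnj q * p * q \<in> \<real>"
  by (metis Reals_quat_commute mult.assoc qcnj_mult_self Reals_mult Reals_of_real)

lemma qcnj_conj_in_Reals_iff:
  assumes "q \<noteq> 0"
  shows "qcnj q * p * q \<in> \<real> \<longleftrightarrow> p \<in> \<real>"
proof
  assume r: "qcnj q * p * q \<in> \<real>"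
  have "(qnorm2 q * qnorm2 q) *\<^sub>R p = q * (qcnj q * p * q) * qcnj q"
    by (simp add: mult.assoc mult_qcnj_left mult_qcnj_self of_real_def)
  also have "\<dots> = (qcnj q * p * q) * of_real (qnorm2 q)"
    by (metis Reals_quat_commute[OF r] mult.assoc mult_qcnj_self)
  finally have "(qnorm2 q * qnorm2 q) *\<^sub>R p \<in> \<real>"
    using r by simp
  then show "p \<in> \<real>"
    using assms by (simp add: scaleR_in_Reals_iff)
qed (rule qcnj_conj_in_Reals)

section \<open>The numerical range of a strictly upper triangular matrix\<close>

definition sut_form :: "quat \<Rightarrow> quat \<Rightarrow> quat \<Rightarrow> quat \<Rightarrow> quat \<Rightarrow> quat \<Rightarrow> quat" where
  "sut_form a b c x y z = qcnj x * a * y + qcnj x * b * z + qcnj y * c * z"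

definition sut_range :: "quat \<Rightarrow> quat \<Rightarrow> quat \<Rightarrow> quat set" where
  "sut_range a b c = {sut_form a b c x y z | x y z. qnorm2 x + qnorm2 y + qnorm2 z = 1}"

lemma numrange3_eq_sut_range:
  assumes "strictly_upper_triangular3 A"
  shows "numrange3 A = sut_range (A 1 2) (A 1 3) (A 2 3)"
proof -
  have idx: "{1..3::nat} = {1, 2, 3}"
    by auto
  have "A 1 1 = 0" "A 2 1 = 0" "A 2 2 = 0" "A 3 1 = 0" "A 3 2 = 0" "A 3 3 = 0"
    using assms unfolding strictly_upper_triangular3_def by auto
  then have form: "(\<Sum>i\<in>{1..3}. \<Sum>j\<in>{1..3}. qcnj (v i) * A i j * v j)
      = sut_form (A 1 2) (A 1 3) (A 2 3) (v 1) (v 2) (v 3)" for v :: "nat \<Rightarrow> quat"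
    unfolding idx by (simp add: sut_form_def)
  have "(\<Sum>i\<in>{1..3}. qcnj (v i) * v i) = of_real (qnorm2 (v 1) + qnorm2 (v 2) + qnorm2 (v 3))"
    for v :: "nat \<Rightarrow> quat"
    unfolding idx by (simp add: qcnj_mult_self)
  then have unit: "(\<Sum>i\<in>{1..3}. qcnj (v i) * v i) = 1 \<longleftrightarrow> qnorm2 (v 1) + qnorm2 (v 2) + qnorm2 (v 3) = 1"
    for v :: "nat \<Rightarrow> quat"
    by (metis of_real_eq_1_iff)
  have "sut_form (A 1 2) (A 1 3) (A 2 3) x y z \<in> numrange3 A"
    if "qnorm2 x + qnorm2 y + qnorm2 z = 1" for x y z
  proof -
    define v :: "nat \<Rightarrow> quat" where "v i = (if i = 1 then x else if i = 2 then y else z)" for i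
    show ?thesis
      unfolding numrange3_def form unit using that by (auto simp: v_def intro!: exI[of _ v])
  qed
  then show ?thesis
    unfolding numrange3_def sut_range_def form unit by blast
qed

lemma sut_form_scaleR: "sut_form a b c (r *\<^sub>R x) (r *\<^sub>R y) (r *\<^sub>R z) = r\<^sup>2 *\<^sub>R sut_form a b c x y z"
  by (simp add: sut_form_def qcnj_scaleR power2_eq_square scaleR_add_right)

lemma sut_form_normalize:
  assumes "qnorm2 x + qnorm2 y + qnorm2 z = N" "N > 0"
  shows "(1 / N) *\<^sub>R sut_form a b c x y z \<in> sut_range a b c"
proof -
  define k where "k = 1 / sqrt N"
  have k2: "k\<^sup>2 = 1 / N"
    using assms(2) by (simp add: k_def power_divide)
  have "qnorm2 (k *\<^sub>R x) + qnorm2 (k *\<^sub>R y) + qnorm2 (k *\<^sub>R z) = 1"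
    using assms by (simp add: qnorm2_scaleR k2 field_simps)
  then have "sut_form a b c (k *\<^sub>R x) (k *\<^sub>R y) (k *\<^sub>R z) \<in> sut_range a b c"
    unfolding sut_range_def by blast
  then show ?thesis
    by (simp add: sut_form_scaleR k2)
qed

definition qrot :: "quat \<Rightarrow> quat \<Rightarrow> quat" where
  "qrot q w = (1 / qnorm2 q) *\<^sub>R (qcnj q * w * q)"

lemma sut_form_mult_right: "sut_form a b c (x * q) (y * q) (z * q) = qcnj q * sut_form a b c x y z * q"
  by (simp add: sut_form_def qcnj_mult algebra_simps)

lemma sut_range_qrot:
  assumes "w \<in> sut_range a b c" "q \<noteq> 0"
  shows "qrot q w \<in> sut_range a b c"
proof -
  obtain x y z where w: "w = sut_form a b c x y z" and n: "qnorm2 x + qnorm2 y + qnorm2 z = 1"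
    using assms(1) unfolding sut_range_def by blast
  have "qnorm2 (x * q) + qnorm2 (y * q) + qnorm2 (z * q) = qnorm2 q"
    using n by (simp add: qnorm2_mult flip: distrib_right)
  from sut_form_normalize[OF this] show ?thesis
    using assms(2) by (simp add: qrot_def w sut_form_mult_right qnorm2_pos_iff)
qed

lemma qrot_qcnj_qrot: "q \<noteq> 0 \<Longrightarrow> qrot (qcnj q) (qrot q w) = w"
  by (simp add: qrot_def mult.assoc mult_qcnj_left mult_qcnj_self of_real_def)

lemma qrot_in_sut_range_iff: "q \<noteq> 0 \<Longrightarrow> qrot q w \<in> sut_range a b c \<longleftrightarrow> w \<in> sut_range a b c"
  by (metis sut_range_qrot qrot_qcnj_qrot qnorm2_qcnj qnorm2_eq_0_iff)

definition quat_of_complex :: "complex \<Rightarrow> quat" where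
  "quat_of_complex z = Quat (Complex.Re z) (Im z) 0 0"

lemma quat_of_complex_simps [simp]:
  "quat.Re (quat_of_complex z) = Complex.Re z" "Im1 (quat_of_complex z) = Im z"
  "Im2 (quat_of_complex z) = 0" "Im3 (quat_of_complex z) = 0"
  by (simp_all add: quat_of_complex_def)

definition im_norm :: "quat \<Rightarrow> real" where
  "im_norm w = sqrt ((Im1 w)\<^sup>2 + (Im2 w)\<^sup>2 + (Im3 w)\<^sup>2)"

lemma qrot_eqI: "q \<noteq> 0 \<Longrightarrow> qcnj q * w * q = qnorm2 q *\<^sub>R v \<Longrightarrow> qrot q w = v"
  by (simp add: qrot_def)

text \<open>For \<open>r = \<parallel>p\<parallel>\<close>, conjugation by \<open>(r + p1) - p3 j + p2 k\<close> rotates the imaginary part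
  \<open>p1 i + p2 j + p3 k\<close> onto \<open>r i\<close>; the rotor degenerates exactly when \<open>p\<close> points along \<open>-i\<close>.\<close>

lemma qcnj_rotor_conj:
  fixes a p1 p2 p3 r :: real
  assumes "r\<^sup>2 = p1\<^sup>2 + p2\<^sup>2 + p3\<^sup>2"
  defines "q \<equiv> Quat (r + p1) 0 (- p3) p2"
  shows "qcnj q * Quat a p1 p2 p3 * q = qnorm2 q *\<^sub>R Quat a r 0 0"
proof -
  have "(r + p1) * a * (r + p1) + ((r + p1) * p2 + p3 * a - p2 * p1) * p3
      - ((r + p1) * p3 - p3 * p1 - p2 * a) * p2 = ((r + p1)\<^sup>2 + p3\<^sup>2 + p2\<^sup>2) * a"
    by algebra
  moreover have "((r + p1) * p1 + p3 * p3 + p2 * p2) * (r + p1) + ((r + p1) * p2 + p3 * a - p2 * p1) * p2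
      + ((r + p1) * p3 - p3 * p1 - p2 * a) * p3 = ((r + p1)\<^sup>2 + p3\<^sup>2 + p2\<^sup>2) * r"
    using assms(1) by algebra
  moreover have "- ((r + p1) * a * p3) - ((r + p1) * p1 + p3 * p3 + p2 * p2) * p2
      + ((r + p1) * p2 + p3 * a - p2 * p1) * (r + p1) = 0"
    using assms(1) by algebra
  moreover have "(r + p1) * a * p2 - ((r + p1) * p1 + p3 * p3 + p2 * p2) * p3
      + ((r + p1) * p3 - p3 * p1 - p2 * a) * (r + p1) = 0"
    using assms(1) by algebra
  ultimately show ?thesis
    by (simp add: q_def quat_eq_iff qnorm2_def)
qed

lemma exists_qrot_to_complex:
  "\<exists>q s. q \<noteq> 0 \<and> (s = im_norm w \<or> s = - im_norm w) \<and> qrot q w = quat_of_complex (Complex (quat.Re w) s)"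
proof -
  define r where "r = im_norm w"
  define q where "q = Quat (r + Im1 w) 0 (- Im3 w) (Im2 w)"
  show ?thesis
  proof (cases "q = 0")
    case True
    then have "Im1 w = - r" "Im2 w = 0" "Im3 w = 0"
      by (simp_all add: q_def quat_eq_iff)
    then have "qrot 1 w = quat_of_complex (Complex (quat.Re w) (- r))"
      by (simp add: qrot_def quat_eq_iff)
    then show ?thesis
      unfolding r_def by (metis one_neq_zero)
  next
    case False
    have "r\<^sup>2 = (Im1 w)\<^sup>2 + (Im2 w)\<^sup>2 + (Im3 w)\<^sup>2"
      by (simp add: r_def im_norm_def)
    moreover have "Quat (quat.Re w) (Im1 w) (Im2 w) (Im3 w) = w"
      by (simp add: quat_eq_iff)
    ultimately have "qcnj q * w * q = qnorm2 q *\<^sub>R quat_of_complex (Complex (quat.Re w) r)"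
      using qcnj_rotor_conj[of r "Im1 w" "Im2 w" "Im3 w" "quat.Re w"] by (simp add: q_def quat_of_complex_def)
    then have "qrot q w = quat_of_complex (Complex (quat.Re w) r)"
      by (rule qrot_eqI[OF False])
    with False show ?thesis
      unfolding r_def by blast
  qed
qed

lemma qrot_j_quat_of_complex: "qrot (Quat 0 0 1 0) (quat_of_complex z) = quat_of_complex (cnj z)"
  by (simp add: qrot_def qnorm2_def quat_eq_iff)

lemma sut_form_mult_left:
  "sut_form a b c (d1 * x) (d2 * y) (d3 * z) = sut_form (qcnj d1 * a * d2) (qcnj d1 * b * d3) (qcnj d2 * c * d3) x y z"
  by (simp add: sut_form_def qcnj_mult mult.assoc)

lemma sut_range_unitary_subset:
  assumes "qnorm2 d1 = 1" "qnorm2 d2 = 1" "qnorm2 d3 = 1"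
  shows "sut_range (qcnj d1 * a * d2) (qcnj d1 * b * d3) (qcnj d2 * c * d3) \<subseteq> sut_range a b c"
proof
  fix w
  assume "w \<in> sut_range (qcnj d1 * a * d2) (qcnj d1 * b * d3) (qcnj d2 * c * d3)"
  then obtain x y z where "w = sut_form a b c (d1 * x) (d2 * y) (d3 * z)" "qnorm2 x + qnorm2 y + qnorm2 z = 1"
    unfolding sut_range_def sut_form_mult_left by blast
  moreover have "qnorm2 (d1 * x) + qnorm2 (d2 * y) + qnorm2 (d3 * z) = qnorm2 x + qnorm2 y + qnorm2 z"
    using assms by (simp add: qnorm2_mult)
  ultimately show "w \<in> sut_range a b c"
    unfolding sut_range_def by auto
qed

lemma sut_range_unitary:
  assumes "qnorm2 d1 = 1" "qnorm2 d2 = 1" "qnorm2 d3 = 1"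
  shows "sut_range (qcnj d1 * a * d2) (qcnj d1 * b * d3) (qcnj d2 * c * d3) = sut_range a b c"
proof
  have "sut_range a b c = sut_range (qcnj (qcnj d1) * (qcnj d1 * a * d2) * qcnj d2)
      (qcnj (qcnj d1) * (qcnj d1 * b * d3) * qcnj d3) (qcnj (qcnj d2) * (qcnj d2 * c * d3) * qcnj d3)"
    using assms by (simp add: mult.assoc mult_qcnj_left mult_qcnj_self)
  also have "\<dots> \<subseteq> sut_range (qcnj d1 * a * d2) (qcnj d1 * b * d3) (qcnj d2 * c * d3)"
    using assms by (intro sut_range_unitary_subset) simp_all
  finally show "sut_range a b c \<subseteq> \<dots>" .
qed (rule sut_range_unitary_subset[OF assms])

section \<open>The complex numerical range is convex\<close>

definition csut_form :: "complex \<Rightarrow> complex \<Rightarrow> complex \<Rightarrow> complex \<Rightarrow> complex \<Rightarrow> complex \<Rightarrow> complex" where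
  "csut_form a b c x y z = cnj x * a * y + cnj x * b * z + cnj y * c * z"

definition cnorm3 :: "complex \<Rightarrow> complex \<Rightarrow> complex \<Rightarrow> complex" where
  "cnorm3 x y z = cnj x * x + cnj y * y + cnj z * z"

definition csut_range :: "complex \<Rightarrow> complex \<Rightarrow> complex \<Rightarrow> complex set" where
  "csut_range a b c = {csut_form a b c x y z | x y z. cnorm3 x y z = 1}"

definition csut_polar ::
    "complex \<Rightarrow> complex \<Rightarrow> complex \<Rightarrow> complex \<Rightarrow> complex \<Rightarrow> complex \<Rightarrow> complex \<Rightarrow> complex \<Rightarrow> complex \<Rightarrow> complex"
  where "csut_polar a b c x1 x2 x3 y1 y2 y3 = cnj x1 * a * y2 + cnj x1 * b * y3 + cnj x2 * c * y3"

definition cinner3 :: "complex \<Rightarrow> complex \<Rightarrow> complex \<Rightarrow> complex \<Rightarrow> complex \<Rightarrow> complex \<Rightarrow> complex" where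
  "cinner3 x1 x2 x3 y1 y2 y3 = cnj x1 * y1 + cnj x2 * y2 + cnj x3 * y3"

lemma csut_form_combination:
  "csut_form a b c (\<alpha> * x1 + \<beta> * y1) (\<alpha> * x2 + \<beta> * y2) (\<alpha> * x3 + \<beta> * y3) =
     cnj \<alpha> * \<alpha> * csut_form a b c x1 x2 x3 + cnj \<beta> * \<beta> * csut_form a b c y1 y2 y3
     + cnj \<alpha> * \<beta> * csut_polar a b c x1 x2 x3 y1 y2 y3 + cnj \<beta> * \<alpha> * csut_polar a b c y1 y2 y3 x1 x2 x3"
  by (simp add: csut_form_def csut_polar_def algebra_simps)

lemma cnorm3_combination:
  "cnorm3 (\<alpha> * x1 + \<beta> * y1) (\<alpha> * x2 + \<beta> * y2) (\<alpha> * x3 + \<beta> * y3) =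
     cnj \<alpha> * \<alpha> * cnorm3 x1 x2 x3 + cnj \<beta> * \<beta> * cnorm3 y1 y2 y3
     + cnj \<alpha> * \<beta> * cinner3 x1 x2 x3 y1 y2 y3 + cnj \<beta> * \<alpha> * cinner3 y1 y2 y3 x1 x2 x3"
  by (simp add: cnorm3_def cinner3_def algebra_simps)

lemma csut_form_mult: "csut_form a b c (k * x) (k * y) (k * z) = cnj k * k * csut_form a b c x y z"
  by (simp add: csut_form_def algebra_simps)

lemma cnorm3_mult: "cnorm3 (k * x) (k * y) (k * z) = cnj k * k * cnorm3 x y z"
  by (simp add: cnorm3_def algebra_simps)

lemma cnj_mult_self: "cnj z * z = of_real ((cmod z)\<^sup>2)"
  using complex_norm_square[of z] by (simp add: mult.commute)

lemma cnorm3_eq: "cnorm3 x y z = of_real ((cmod x)\<^sup>2 + (cmod y)\<^sup>2 + (cmod z)\<^sup>2)"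
  by (simp add: cnorm3_def cnj_mult_self)

lemma cnorm3_eq_0_iff: "cnorm3 x y z = 0 \<longleftrightarrow> x = 0 \<and> y = 0 \<and> z = 0"
  by (simp add: cnorm3_eq add_nonneg_eq_0_iff del: of_real_add)

lemma csut_form_normalize:
  assumes "cnorm3 x y z = of_real N" "N > 0"
  shows "csut_form a b c x y z / of_real N \<in> csut_range a b c"
proof -
  define k where "k = complex_of_real (1 / sqrt N)"
  have k: "cnj k * k = 1 / of_real N"
    using assms(2) by (simp add: k_def power2_eq_square[symmetric] power_divide flip: of_real_mult of_real_power)
  have "cnorm3 (k * x) (k * y) (k * z) = 1"
    using assms by (simp add: cnorm3_mult k)
  then have "csut_form a b c (k * x) (k * y) (k * z) \<in> csut_range a b c"
    unfolding csut_range_def by blast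
  then show ?thesis
    by (simp add: csut_form_mult k)
qed

lemma exists_unimodular_Im_eq_0: "\<exists>\<mu>. cnj \<mu> * \<mu> = 1 \<and> Im (cnj \<mu> * p + \<mu> * q) = 0"
proof (cases "p = cnj q")
  case True
  then show ?thesis
    by (intro exI[of _ 1]) simp
next
  case False
  define m where "m = p - cnj q"
  have "m \<noteq> 0"
    using False by (simp add: m_def)
  have "cnj m * p + m * q = cnj p * p - cnj q * q"
    by (simp add: m_def algebra_simps)
  then have "Im ((cnj m * p + m * q) / of_real (cmod m)) = 0"
    by (simp add: cnj_mult_self)
  moreover have "cnj (m / of_real (cmod m)) * (m / of_real (cmod m)) = 1"
    using \<open>m \<noteq> 0\<close> by (simp add: cnj_mult_self power2_eq_square)
  ultimately show ?thesis
    by (intro exI[of _ "m / of_real (cmod m)"]) (simp add: add_divide_distrib)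
qed

lemma exists_unimodular_real_combination:
  assumes "d \<noteq> 0"
  shows "\<exists>\<mu> \<rho>. cnj \<mu> * \<mu> = 1 \<and> cnj \<mu> * P + \<mu> * Q = of_real \<rho> * d"
proof -
  obtain \<mu> where \<mu>: "cnj \<mu> * \<mu> = 1" and "Im (cnj \<mu> * (P / d) + \<mu> * (Q / d)) = 0"
    using exists_unimodular_Im_eq_0 by blast
  then have "cnj \<mu> * (P / d) + \<mu> * (Q / d) = of_real (Complex.Re (cnj \<mu> * (P / d) + \<mu> * (Q / d)))"
    by (simp add: complex_eq_iff)
  then have "cnj \<mu> * P + \<mu> * Q = of_real (Complex.Re (cnj \<mu> * (P / d) + \<mu> * (Q / d))) * d"
    using assms by (simp add: field_simps)
  with \<mu> show ?thesis
    by blast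
qed

lemma exists_segment_parameter:
  fixes \<rho> k v :: real
  assumes "0 \<le> v" "v \<le> 1"
  shows "\<exists>s. s\<^sup>2 + (1 - s) * s * \<rho> = v * ((1 - s)\<^sup>2 + s\<^sup>2 + (1 - s) * s * k)"
proof -
  define g where "g s = s\<^sup>2 + (1 - s) * s * \<rho> - v * ((1 - s)\<^sup>2 + s\<^sup>2 + (1 - s) * s * k)" for s
  have "g 0 \<le> 0" "0 \<le> g 1" "continuous_on {0..1} g"
    using assms by (auto simp: g_def intro!: continuous_intros)
  then obtain s where "g s = 0"
    using IVT'[of g 0 0 1] by auto
  then show ?thesis
    unfolding g_def by auto
qed

lemma csut_form_eq_if_dependent:
  assumes "cnorm3 x1 x2 x3 = 1" "cnorm3 y1 y2 y3 = 1" "\<alpha> \<noteq> 0"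
    and "\<alpha> * x1 + \<beta> * y1 = 0" "\<alpha> * x2 + \<beta> * y2 = 0" "\<alpha> * x3 + \<beta> * y3 = 0"
  shows "csut_form a b c x1 x2 x3 = csut_form a b c y1 y2 y3"
proof -
  have "\<beta> \<noteq> 0"
    using assms by (auto simp: cnorm3_def)
  define k where "k = - \<beta> / \<alpha>"
  have x: "x1 = k * y1" "x2 = k * y2" "x3 = k * y3"
    using assms(3-6) by (simp_all add: k_def field_simps add_eq_0_iff2)
  have "cnj k * k = 1"
    using assms(1,2) cnorm3_mult[of k y1 y2 y3] by (simp add: x)
  then show ?thesis
    by (simp add: x csut_form_mult)
qed

definition cseg :: "complex \<Rightarrow> real \<Rightarrow> complex \<Rightarrow> complex \<Rightarrow> complex" where
  "cseg \<mu> s t1 t2 = of_real (1 - s) * \<mu> * t1 + of_real s * t2"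

lemma cnorm3_cseg:
  assumes "cnorm3 x1 x2 x3 = 1" "cnorm3 y1 y2 y3 = 1" "cnj \<mu> * \<mu> = 1"
  shows "cnorm3 (cseg \<mu> s x1 y1) (cseg \<mu> s x2 y2) (cseg \<mu> s x3 y3) = of_real ((1 - s)\<^sup>2 + s\<^sup>2)
    + of_real ((1 - s) * s) * (cnj \<mu> * cinner3 x1 x2 x3 y1 y2 y3 + \<mu> * cinner3 y1 y2 y3 x1 x2 x3)"
proof -
  have \<mu>: "\<mu> * (cnj \<mu> * t) = t" for t
    using assms(3) by (metis mult.assoc mult.commute mult_1_left)
  show ?thesis
    unfolding cseg_def cnorm3_combination using assms by (simp add: \<mu> algebra_simps power2_eq_square)
qed

lemma csut_form_cseg:
  fixes a b c :: complex
  assumes "cnorm3 x1 x2 x3 = 1" "cnorm3 y1 y2 y3 = 1" "cnj \<mu> * \<mu> = 1"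
  defines "w1 \<equiv> csut_form a b c x1 x2 x3" and "w2 \<equiv> csut_form a b c y1 y2 y3"
  shows "csut_form a b c (cseg \<mu> s x1 y1) (cseg \<mu> s x2 y2) (cseg \<mu> s x3 y3)
      = cnorm3 (cseg \<mu> s x1 y1) (cseg \<mu> s x2 y2) (cseg \<mu> s x3 y3) * w1 + of_real (s\<^sup>2) * (w2 - w1)
        + of_real ((1 - s) * s) * (cnj \<mu> * (csut_polar a b c x1 x2 x3 y1 y2 y3 - cinner3 x1 x2 x3 y1 y2 y3 * w1)
          + \<mu> * (csut_polar a b c y1 y2 y3 x1 x2 x3 - cinner3 y1 y2 y3 x1 x2 x3 * w1))"
proof -
  have \<mu>: "\<mu> * (cnj \<mu> * t) = t" for t
    using assms(3) by (metis mult.assoc mult.commute mult_1_left)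
  have "csut_form a b c (cseg \<mu> s x1 y1) (cseg \<mu> s x2 y2) (cseg \<mu> s x3 y3) =
      of_real ((1 - s)\<^sup>2) * w1 + of_real (s\<^sup>2) * w2 + of_real ((1 - s) * s) *
        (cnj \<mu> * csut_polar a b c x1 x2 x3 y1 y2 y3 + \<mu> * csut_polar a b c y1 y2 y3 x1 x2 x3)"
    unfolding cseg_def csut_form_combination using assms(3)
    by (simp add: \<mu> w1_def w2_def algebra_simps power2_eq_square)
  then show ?thesis
    unfolding cnorm3_cseg[OF assms(1-3)] by (simp add: algebra_simps power2_eq_square)
qed

lemma cnorm3_cseg_neq_0:
  assumes "cnorm3 x1 x2 x3 = 1" "cnorm3 y1 y2 y3 = 1" "cnj \<mu> * \<mu> = 1"
    and "csut_form a b c x1 x2 x3 \<noteq> csut_form a b c y1 y2 y3"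
  shows "cnorm3 (cseg \<mu> s x1 y1) (cseg \<mu> s x2 y2) (cseg \<mu> s x3 y3) \<noteq> 0"
proof
  assume "cnorm3 (cseg \<mu> s x1 y1) (cseg \<mu> s x2 y2) (cseg \<mu> s x3 y3) = 0"
  then have Z: "cseg \<mu> s x1 y1 = 0" "cseg \<mu> s x2 y2 = 0" "cseg \<mu> s x3 y3 = 0"
    by (simp_all add: cnorm3_eq_0_iff)
  show False
  proof (cases "s = 1")
    case True
    then show False
      using Z assms(2) by (simp add: cseg_def cnorm3_def)
  next
    case False
    then have "of_real (1 - s) * \<mu> \<noteq> 0"
      using assms(3) by auto
    then show False
      using Z assms(4) unfolding cseg_def by (metis csut_form_eq_if_dependent[OF assms(1,2)])
  qed
qed

text \<open>Toeplitz--Hausdorff: given unit vectors \<open>x, y\<close> with values \<open>w1 \<noteq> w2\<close>, choose the phase \<open>\<mu>\<close> so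
  that along the curve \<open>cseg \<mu> s x y\<close> the form minus \<open>w1\<close> times the norm stays on the real line through
  \<open>w2 - w1\<close>; normalising and applying the intermediate value theorem then reaches every point of
  the segment.\<close>

lemma csut_range_convex: "convex (csut_range a b c)"
proof (rule convexI)
  fix w1 w2 and u v :: real
  assume "w1 \<in> csut_range a b c" "w2 \<in> csut_range a b c" and uv: "0 \<le> u" "0 \<le> v" "u + v = 1"
  then obtain x1 x2 x3 y1 y2 y3
    where w1: "w1 = csut_form a b c x1 x2 x3" and x: "cnorm3 x1 x2 x3 = 1"
      and w2: "w2 = csut_form a b c y1 y2 y3" and y: "cnorm3 y1 y2 y3 = 1"
    unfolding csut_range_def by blast
  show "u *\<^sub>R w1 + v *\<^sub>R w2 \<in> csut_range a b c"
  proof (cases "w1 = w2")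
    case True
    then show ?thesis
      using \<open>w1 \<in> csut_range a b c\<close> uv by (simp flip: scaleR_add_left)
  next
    case False
    define P where "P = csut_polar a b c x1 x2 x3 y1 y2 y3 - cinner3 x1 x2 x3 y1 y2 y3 * w1"
    define Q where "Q = csut_polar a b c y1 y2 y3 x1 x2 x3 - cinner3 y1 y2 y3 x1 x2 x3 * w1"
    obtain \<mu> \<rho> where \<mu>: "cnj \<mu> * \<mu> = 1" and \<rho>: "cnj \<mu> * P + \<mu> * Q = of_real \<rho> * (w2 - w1)"
      using exists_unimodular_real_combination[of "w2 - w1" P Q] False by auto
    define \<kappa> where "\<kappa> = cnj \<mu> * cinner3 x1 x2 x3 y1 y2 y3 + \<mu> * cinner3 y1 y2 y3 x1 x2 x3"
    define N where "N s = (1 - s)\<^sup>2 + s\<^sup>2 + (1 - s) * s * Complex.Re \<kappa>" for s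
    have norm: "cnorm3 (cseg \<mu> s x1 y1) (cseg \<mu> s x2 y2) (cseg \<mu> s x3 y3) = of_real (N s)" for s
      using cnorm3_cseg[OF x y \<mu>, of s] cnorm3_eq[of "cseg \<mu> s x1 y1" "cseg \<mu> s x2 y2" "cseg \<mu> s x3 y3"]
      by (simp add: N_def \<kappa>_def complex_eq_iff)
    have form: "csut_form a b c (cseg \<mu> s x1 y1) (cseg \<mu> s x2 y2) (cseg \<mu> s x3 y3)
        = of_real (N s) * w1 + of_real (s\<^sup>2 + (1 - s) * s * \<rho>) * (w2 - w1)" for s
    proof -
      have "csut_form a b c (cseg \<mu> s x1 y1) (cseg \<mu> s x2 y2) (cseg \<mu> s x3 y3)
          = of_real (N s) * w1 + of_real (s\<^sup>2) * (w2 - w1) + of_real ((1 - s) * s) * (cnj \<mu> * P + \<mu> * Q)"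
        using csut_form_cseg[OF x y \<mu>, of a b c s] unfolding norm by (simp add: P_def Q_def w1 w2)
      then show ?thesis
        unfolding \<rho> by (simp add: algebra_simps)
    qed
    have "u = 1 - v"
      using uv(3) by simp
    obtain s where s: "s\<^sup>2 + (1 - s) * s * \<rho> = v * N s"
      using exists_segment_parameter[of v \<rho> "Complex.Re \<kappa>"] uv unfolding N_def by auto
    have "N s \<noteq> 0"
      using cnorm3_cseg_neq_0[OF x y \<mu>, of a b c s] False unfolding norm w1 w2 by simp
    moreover have "N s \<ge> 0"
      using norm[of s] unfolding cnorm3_eq of_real_eq_iff by (metis add_nonneg_nonneg zero_le_power2)
    ultimately have "csut_form a b c (cseg \<mu> s x1 y1) (cseg \<mu> s x2 y2) (cseg \<mu> s x3 y3) / of_real (N s)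
        \<in> csut_range a b c"
      by (intro csut_form_normalize[OF norm]) simp
    moreover have "csut_form a b c (cseg \<mu> s x1 y1) (cseg \<mu> s x2 y2) (cseg \<mu> s x3 y3)
        = of_real (N s) * (u *\<^sub>R w1 + v *\<^sub>R w2)"
      using s unfolding form \<open>u = 1 - v\<close> by (simp add: scaleR_conv_of_real algebra_simps)
    ultimately show ?thesis
      using \<open>N s \<noteq> 0\<close> by simp
  qed
qed

section \<open>Real entries\<close>

lemma csut_form_cnorm3_eq_0: "cnorm3 x y z = 0 \<Longrightarrow> csut_form a b c x y z = 0"
  by (simp add: cnorm3_eq_0_iff csut_form_def)

lemma csut_form_add_in_csut_range:
  assumes "cnorm3 x1 x2 x3 + cnorm3 y1 y2 y3 = 1"
  shows "csut_form a b c x1 x2 x3 + csut_form a b c y1 y2 y3 \<in> csut_range a b c"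
proof -
  define s where "s = (cmod x1)\<^sup>2 + (cmod x2)\<^sup>2 + (cmod x3)\<^sup>2"
  define t where "t = (cmod y1)\<^sup>2 + (cmod y2)\<^sup>2 + (cmod y3)\<^sup>2"
  have x: "cnorm3 x1 x2 x3 = of_real s" and y: "cnorm3 y1 y2 y3 = of_real t"
    by (simp_all add: s_def t_def cnorm3_eq)
  have "s \<ge> 0" "t \<ge> 0"
    by (simp_all add: s_def t_def)
  have "s + t = 1"
    using assms unfolding x y by (metis of_real_add of_real_eq_1_iff)
  consider "s = 0" | "t = 0" | "s > 0" "t > 0"
    using \<open>s \<ge> 0\<close> \<open>t \<ge> 0\<close> by linarith
  then show ?thesis
  proof cases
    case 1
    then show ?thesis
      using x y \<open>s + t = 1\<close> csut_form_cnorm3_eq_0[of x1 x2 x3] unfolding csut_range_def by auto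
  next
    case 2
    then show ?thesis
      using x y \<open>s + t = 1\<close> csut_form_cnorm3_eq_0[of y1 y2 y3] unfolding csut_range_def by auto
  next
    case 3
    have "s *\<^sub>R (csut_form a b c x1 x2 x3 / of_real s) + t *\<^sub>R (csut_form a b c y1 y2 y3 / of_real t)
        \<in> csut_range a b c"
      using 3 \<open>s + t = 1\<close> by (intro convexD[OF csut_range_convex] csut_form_normalize x y) auto
    then show ?thesis
      using 3 by (simp add: scaleR_conv_of_real)
  qed
qed

text \<open>With \<open>q = cfst q + cnj (csnd q) j\<close>, the real and \<open>i\<close>-parts of a quaternion form with real
  coefficients split into the sum of two complex forms.\<close>

definition cfst :: "quat \<Rightarrow> complex" where
  "cfst q = Complex (quat.Re q) (Im1 q)"

definition csnd :: "quat \<Rightarrow> complex" where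
  "csnd q = Complex (Im2 q) (- Im3 q)"

lemma sut_form_real_split:
  "Complex (quat.Re (sut_form (of_real a) (of_real b) (of_real c) x y z))
           (Im1 (sut_form (of_real a) (of_real b) (of_real c) x y z))
   = csut_form (of_real a) (of_real b) (of_real c) (cfst x) (cfst y) (cfst z)
     + csut_form (of_real a) (of_real b) (of_real c) (csnd x) (csnd y) (csnd z)"
  by (simp add: complex_eq_iff sut_form_def csut_form_def cfst_def csnd_def algebra_simps)

lemma qnorm2_split:
  "cnorm3 (cfst x) (cfst y) (cfst z) + cnorm3 (csnd x) (csnd y) (csnd z) = of_real (qnorm2 x + qnorm2 y + qnorm2 z)"
  by (simp add: cnorm3_def cfst_def csnd_def qnorm2_def complex_eq_iff power2_eq_square)

lemma quat_of_complex_in_sut_range_iff: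
  "quat_of_complex w \<in> sut_range (of_real a) (of_real b) (of_real c)
     \<longleftrightarrow> w \<in> csut_range (of_real a) (of_real b) (of_real c)"
proof
  assume "quat_of_complex w \<in> sut_range (of_real a) (of_real b) (of_real c)"
  then obtain x y z where w: "quat_of_complex w = sut_form (of_real a) (of_real b) (of_real c) x y z"
    and n: "qnorm2 x + qnorm2 y + qnorm2 z = 1"
    unfolding sut_range_def by blast
  have "w = Complex (quat.Re (quat_of_complex w)) (Im1 (quat_of_complex w))"
    by (simp add: complex_eq_iff)
  also have "\<dots> = csut_form (of_real a) (of_real b) (of_real c) (cfst x) (cfst y) (cfst z)
      + csut_form (of_real a) (of_real b) (of_real c) (csnd x) (csnd y) (csnd z)"
    unfolding w sut_form_real_split ..
  also have "\<dots> \<in> csut_range (of_real a) (of_real b) (of_real c)"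
    using n by (intro csut_form_add_in_csut_range) (simp add: qnorm2_split)
  finally show "w \<in> csut_range (of_real a) (of_real b) (of_real c)" .
next
  assume "w \<in> csut_range (of_real a) (of_real b) (of_real c)"
  then obtain x y z where w: "w = csut_form (of_real a) (of_real b) (of_real c) x y z" and n: "cnorm3 x y z = 1"
    unfolding csut_range_def by blast
  have "quat_of_complex w = sut_form (of_real a) (of_real b) (of_real c)
      (quat_of_complex x) (quat_of_complex y) (quat_of_complex z)"
    by (simp add: w quat_eq_iff sut_form_def csut_form_def algebra_simps)
  moreover have "qnorm2 (quat_of_complex x) + qnorm2 (quat_of_complex y) + qnorm2 (quat_of_complex z) = 1"
    using n by (simp add: cnorm3_def qnorm2_def complex_eq_iff power2_eq_square)
  ultimately show "quat_of_complex w \<in> sut_range (of_real a) (of_real b) (of_real c)"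
    unfolding sut_range_def by blast
qed

lemma csut_range_real_cnj:
  "w \<in> csut_range (of_real a) (of_real b) (of_real c) \<Longrightarrow> cnj w \<in> csut_range (of_real a) (of_real b) (of_real c)"
proof -
  assume "w \<in> csut_range (of_real a) (of_real b) (of_real c)"
  then obtain x y z where "w = csut_form (of_real a) (of_real b) (of_real c) x y z" "cnorm3 x y z = 1"
    unfolding csut_range_def by blast
  then have "cnj w = csut_form (of_real a) (of_real b) (of_real c) (cnj x) (cnj y) (cnj z)"
    and "cnorm3 (cnj x) (cnj y) (cnj z) = 1"
    by (simp_all add: csut_form_def cnorm3_eq)
  then show ?thesis
    unfolding csut_range_def by blast
qed

definition quat_lift :: "complex set \<Rightarrow> quat set" where
  "quat_lift C = {w. Complex (quat.Re w) (im_norm w) \<in> C}"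

lemma Complex_mem_if_convex_cnj_closed:
  assumes "convex C" "\<And>z. z \<in> C \<Longrightarrow> cnj z \<in> C" "Complex a t \<in> C" "\<bar>r\<bar> \<le> t"
  shows "Complex a r \<in> C"
proof (cases "t = 0")
  case False
  then have "t > 0"
    using assms(4) by linarith
  have "Complex a (- t) \<in> C"
    using assms(2)[OF assms(3)] by (simp add: complex_cnj)
  moreover have "Complex a r = ((t + r) / (2 * t)) *\<^sub>R Complex a t + ((t - r) / (2 * t)) *\<^sub>R Complex a (- t)"
    using \<open>t > 0\<close> by (simp add: complex_eq_iff field_simps)
  ultimately show ?thesis
    using \<open>t > 0\<close> assms(4) by (simp add: convexD[OF assms(1) assms(3)] field_simps)
qed (use assms in simp)

lemma quat_lift_convex:
  assumes "convex C" "\<And>z. z \<in> C \<Longrightarrow> cnj z \<in> C"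
  shows "convex (quat_lift C)"
proof (rule convexI)
  fix w1 w2 and u v :: real
  assume w1: "w1 \<in> quat_lift C" and w2: "w2 \<in> quat_lift C" and uv: "0 \<le> u" "0 \<le> v" "u + v = 1"
  define w where "w = u *\<^sub>R w1 + v *\<^sub>R w2"
  define t where "t = u * im_norm w1 + v * im_norm w2"
  have im_norm: "im_norm q = norm (Im1 q, Im2 q, Im3 q)" for q
    by (simp add: im_norm_def norm_Pair power2_eq_square add.assoc)
  have "(Im1 w, Im2 w, Im3 w) = u *\<^sub>R (Im1 w1, Im2 w1, Im3 w1) + v *\<^sub>R (Im1 w2, Im2 w2, Im3 w2)"
    by (simp add: w_def)
  then have "\<bar>im_norm w\<bar> \<le> t"
    unfolding im_norm t_def using uv by (metis abs_norm_cancel abs_of_nonneg norm_scaleR norm_triangle_ineq)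
  moreover have "u *\<^sub>R Complex (quat.Re w1) (im_norm w1) + v *\<^sub>R Complex (quat.Re w2) (im_norm w2) \<in> C"
    using convexD[OF assms(1)] w1 w2 uv unfolding quat_lift_def by blast
  moreover have "u *\<^sub>R Complex (quat.Re w1) (im_norm w1) + v *\<^sub>R Complex (quat.Re w2) (im_norm w2)
      = Complex (quat.Re w) t"
    by (simp add: w_def t_def complex_eq_iff)
  ultimately show "u *\<^sub>R w1 + v *\<^sub>R w2 \<in> quat_lift C"
    unfolding quat_lift_def w_def[symmetric] using Complex_mem_if_convex_cnj_closed[OF assms] by auto
qed

lemma sut_range_real_eq_quat_lift:
  "sut_range (of_real a) (of_real b) (of_real c) = quat_lift (csut_range (of_real a) (of_real b) (of_real c))"
proof (intro set_eqI)
  fix w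
  obtain q s where q: "q \<noteq> 0" and s: "s = im_norm w \<or> s = - im_norm w"
    and qw: "qrot q w = quat_of_complex (Complex (quat.Re w) s)"
    using exists_qrot_to_complex by blast
  have "w \<in> sut_range (of_real a) (of_real b) (of_real c)
      \<longleftrightarrow> qrot q w \<in> sut_range (of_real a) (of_real b) (of_real c)"
    by (simp add: qrot_in_sut_range_iff[OF q])
  also have "\<dots> \<longleftrightarrow> Complex (quat.Re w) s \<in> csut_range (of_real a) (of_real b) (of_real c)"
    unfolding qw quat_of_complex_in_sut_range_iff ..
  also have "\<dots> \<longleftrightarrow> Complex (quat.Re w) (im_norm w) \<in> csut_range (of_real a) (of_real b) (of_real c)"
    using s csut_range_real_cnj[of "Complex (quat.Re w) s"] csut_range_real_cnj[of "Complex (quat.Re w) (- s)"]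
    by (auto simp: complex_cnj)
  finally show "w \<in> sut_range (of_real a) (of_real b) (of_real c)
      \<longleftrightarrow> w \<in> quat_lift (csut_range (of_real a) (of_real b) (of_real c))"
    unfolding quat_lift_def by simp
qed

lemma sut_range_real_convex: "convex (sut_range (of_real a) (of_real b) (of_real c))"
  unfolding sut_range_real_eq_quat_lift
  by (intro quat_lift_convex csut_range_convex csut_range_real_cnj)

section \<open>Sufficiency\<close>

definition qsgn :: "quat \<Rightarrow> quat" where
  "qsgn q = (if q = 0 then 1 else (1 / sqrt (qnorm2 q)) *\<^sub>R q)"

lemma qnorm2_qsgn: "qnorm2 (qsgn q) = 1"
  by (simp add: qsgn_def qnorm2_scaleR power_divide qnorm2_pos_iff less_imp_le)

lemma mult_qsgn_qcnj_in_Reals: "q * qsgn (qcnj q) \<in> \<real>"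
  by (simp add: qsgn_def mult_qcnj_self)

lemma qcnj_qsgn_mult_in_Reals: "qcnj (qsgn q) * q \<in> \<real>"
  by (simp add: qsgn_def qcnj_scaleR qcnj_mult_self)

lemma triple_product_in_Reals_swap:
  assumes "qcnj b * a * c \<in> \<real>" "b \<noteq> 0"
  shows "a * c * qcnj b \<in> \<real>"
proof -
  have "b * (qcnj b * a * c) * qcnj b = qnorm2 b *\<^sub>R (a * c * qcnj b)"
    by (simp add: mult.assoc mult_qcnj_left)
  moreover have "b * (qcnj b * a * c) * qcnj b \<in> \<real>"
    using assms qcnj_conj_in_Reals_iff[of "qcnj b" "qcnj b * a * c"] by simp
  ultimately show ?thesis
    using assms(2) scaleR_in_Reals_iff[of "qnorm2 b" "a * c * qcnj b"] by simp
qed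

lemma exists_unitary_real_entries:
  assumes "qcnj b * a * c \<in> \<real>"
  obtains d2 d3 where "qnorm2 d2 = 1" "qnorm2 d3 = 1" "a * d2 \<in> \<real>" "b * d3 \<in> \<real>" "qcnj d2 * c * d3 \<in> \<real>"
proof -
  consider "b = 0" | "b \<noteq> 0" "a = 0" | "b \<noteq> 0" "a \<noteq> 0"
    by blast
  then show ?thesis
  proof cases
    case 1
    define d2 where "d2 = qsgn (qcnj a)"
    show ?thesis
      by (rule that[of d2 "qsgn (qcnj (qcnj d2 * c))"])
        (simp_all add: 1 d2_def qnorm2_qsgn mult_qsgn_qcnj_in_Reals)
  next
    case 2
    define d3 where "d3 = qsgn (qcnj b)"
    show ?thesis
      by (rule that[of "qsgn (c * d3)" d3])
        (simp_all add: 2 d3_def qnorm2_qsgn mult_qsgn_qcnj_in_Reals qcnj_qsgn_mult_in_Reals mult.assoc)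
  next
    case 3
    define s t where "s = 1 / sqrt (qnorm2 a)" and "t = 1 / sqrt (qnorm2 b)"
    have "qsgn (qcnj a) = s *\<^sub>R qcnj a" "qsgn (qcnj b) = t *\<^sub>R qcnj b"
      using 3 by (simp_all add: qsgn_def s_def t_def)
    then have "qcnj (qsgn (qcnj a)) * c * qsgn (qcnj b) = (s * t) *\<^sub>R (a * c * qcnj b)"
      by (simp add: qcnj_scaleR)
    also have "\<dots> \<in> \<real>"
      using triple_product_in_Reals_swap[OF assms \<open>b \<noteq> 0\<close>] by simp
    finally show ?thesis
      by (intro that[of "qsgn (qcnj a)" "qsgn (qcnj b)"]) (simp_all add: qnorm2_qsgn mult_qsgn_qcnj_in_Reals)
  qed
qed

lemma sut_range_convex_if_triple_product_in_Reals:
  assumes "qcnj b * a * c \<in> \<real>"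
  shows "convex (sut_range a b c)"
proof -
  obtain d2 d3 where d: "qnorm2 d2 = 1" "qnorm2 d3 = 1" "a * d2 \<in> \<real>" "b * d3 \<in> \<real>" "qcnj d2 * c * d3 \<in> \<real>"
    using exists_unitary_real_entries[OF assms] .
  then obtain ra rb rc where "a * d2 = of_real ra" "b * d3 = of_real rb" "qcnj d2 * c * d3 = of_real rc"
    by (metis Reals_cases)
  then have "sut_range a b c = sut_range (of_real ra) (of_real rb) (of_real rc)"
    using sut_range_unitary[of 1 d2 d3 a b c] d by simp
  then show ?thesis
    by (simp add: sut_range_real_convex)
qed

section \<open>Necessity\<close>

definition quat_of_r4 :: "real \<times> real \<times> real \<times> real \<Rightarrow> quat" where
  "quat_of_r4 v = Quat (fst v) (fst (snd v)) (fst (snd (snd v))) (snd (snd (snd v)))"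

lemma quat_of_r4_inverse: "quat_of_r4 (quat.Re q, Im1 q, Im2 q, Im3 q) = q"
  by (simp add: quat_of_r4_def quat_eq_iff)

lemma norm_r4_eq_qnorm2: "(norm v)\<^sup>2 = qnorm2 (quat_of_r4 v)"
  by (cases v) (simp add: norm_Pair qnorm2_def quat_of_r4_def add.assoc)

lemma sut_range_Re_attains_max: "\<exists>w\<in>sut_range a b c. \<forall>w'\<in>sut_range a b c. quat.Re w' \<le> quat.Re w"
proof -
  define f where "f v = sut_form a b c (quat_of_r4 (fst v)) (quat_of_r4 (fst (snd v))) (quat_of_r4 (snd (snd v)))"
    for v :: "(real \<times> real \<times> real \<times> real) \<times> (real \<times> real \<times> real \<times> real) \<times> (real \<times> real \<times> real \<times> real)"
  have norm2: "(norm v)\<^sup>2 = qnorm2 (quat_of_r4 (fst v)) + qnorm2 (quat_of_r4 (fst (snd v))) + qnorm2 (quat_of_r4 (snd (snd v)))"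
    for v :: "(real \<times> real \<times> real \<times> real) \<times> (real \<times> real \<times> real \<times> real) \<times> (real \<times> real \<times> real \<times> real)"
    by (cases v) (simp add: norm_Pair add.assoc flip: norm_r4_eq_qnorm2)
  have sphere: "v \<in> sphere 0 1 \<longleftrightarrow>
      qnorm2 (quat_of_r4 (fst v)) + qnorm2 (quat_of_r4 (fst (snd v))) + qnorm2 (quat_of_r4 (snd (snd v))) = 1" for v
    using norm2[of v] norm_ge_zero[of v] by (auto simp: power2_eq_1_iff simp del: norm_ge_zero)
  have range: "sut_range a b c = f ` sphere 0 1"
  proof (intro set_eqI iffI)
    fix w
    assume "w \<in> sut_range a b c"
    then obtain x y z where w: "w = sut_form a b c x y z" and n: "qnorm2 x + qnorm2 y + qnorm2 z = 1"
      unfolding sut_range_def by blast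
    define v where "v = ((quat.Re x, Im1 x, Im2 x, Im3 x), (quat.Re y, Im1 y, Im2 y, Im3 y), (quat.Re z, Im1 z, Im2 z, Im3 z))"
    have "v \<in> sphere 0 1" "w = f v"
      using n unfolding sphere by (simp_all add: v_def f_def w quat_of_r4_inverse)
    then show "w \<in> f ` sphere 0 1"
      by blast
  next
    fix w
    assume "w \<in> f ` sphere 0 1"
    then obtain v where "v \<in> sphere 0 1" "w = f v"
      by blast
    then show "w \<in> sut_range a b c"
      unfolding sut_range_def f_def sphere by blast
  qed
  have "continuous_on (sphere 0 1) (\<lambda>v. quat.Re (f v))"
    unfolding f_def sut_form_def quat_of_r4_def by (simp, intro continuous_intros)
  then obtain v where "v \<in> sphere 0 1" "\<And>u. u \<in> sphere 0 1 \<Longrightarrow> quat.Re (f u) \<le> quat.Re (f v)"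
    using continuous_attains_sup[OF compact_sphere] sphere_eq_empty by (metis not_one_less_zero)
  then show ?thesis
    unfolding range by blast
qed

lemma sut_form_Re_le:
  assumes "\<And>w. w \<in> sut_range a b c \<Longrightarrow> quat.Re w \<le> l"
  shows "quat.Re (sut_form a b c x y z) \<le> l * (qnorm2 x + qnorm2 y + qnorm2 z)"
proof (cases "x = 0 \<and> y = 0 \<and> z = 0")
  case True
  then show ?thesis
    by (simp add: sut_form_def)
next
  case False
  define N where "N = qnorm2 x + qnorm2 y + qnorm2 z"
  have "N > 0"
    using False qnorm2_pos_iff[of x] qnorm2_pos_iff[of y] qnorm2_pos_iff[of z] qnorm2_nonneg[of x]
      qnorm2_nonneg[of y] qnorm2_nonneg[of z] unfolding N_def by linarith
  then have "quat.Re (sut_form a b c x y z) / N \<le> l"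
    using assms[OF sut_form_normalize[OF N_def[symmetric]]] by simp
  with \<open>N > 0\<close> show ?thesis
    by (simp add: N_def pos_divide_le_eq mult.commute)
qed

lemma quadratic_nonpos_imp_linear_coeff_eq_0:
  fixes S R :: real
  assumes "\<And>t. t * S + t\<^sup>2 * R \<le> 0"
  shows "S = 0"
proof (rule ccontr)
  assume "S \<noteq> 0"
  define K where "K = \<bar>R\<bar> + 1"
  have "K > 0" "2 * K + R > 0"
    by (simp_all add: K_def)
  then have "0 < S\<^sup>2 / (4 * K\<^sup>2) * (2 * K + R)"
    using \<open>S \<noteq> 0\<close> by simp
  also have "\<dots> = S / (2 * K) * S + (S / (2 * K))\<^sup>2 * R"
    using \<open>K > 0\<close> by (simp add: field_simps power2_eq_square)
  also have "\<dots> \<le> 0"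
    by (rule assms)
  finally show False
    by simp
qed

lemma Re_sut_form_add_scaleR:
  "quat.Re (sut_form a b c (x + t *\<^sub>R u) (y + t *\<^sub>R v) (z + t *\<^sub>R w)) = quat.Re (sut_form a b c x y z)
   + t * (quat.Re (qcnj u * (a * y + b * z)) + quat.Re (qcnj v * (qcnj a * x + c * z))
     + quat.Re (qcnj w * (qcnj b * x + qcnj c * y)))
   + t\<^sup>2 * quat.Re (sut_form a b c u v w)"
  by (simp add: sut_form_def algebra_simps power2_eq_square)

lemma qnorm2_add_scaleR: "qnorm2 (x + t *\<^sub>R u) = qnorm2 x + 2 * t * quat.Re (qcnj u * x) + t\<^sup>2 * qnorm2 u"
  by (simp add: qnorm2_def algebra_simps power2_eq_square)

lemma Re_qcnj_mult_add: "quat.Re (qcnj g * (g + of_real r * x)) = qnorm2 g + r * quat.Re (qcnj g * x)"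
  by (simp add: qnorm2_def algebra_simps power2_eq_square)

text \<open>Moving a maximiser of \<open>Re x\<^sup>*Ax - l \<parallel>x\<parallel>\<^sup>2\<close> in the direction \<open>g = (A + A\<^sup>* - 2l) x\<close>
  changes it by \<open>t \<parallel>g\<parallel>\<^sup>2 + O(t\<^sup>2)\<close>, so \<open>g = 0\<close>.\<close>

lemma sut_form_max_eigen:
  assumes N: "qnorm2 x + qnorm2 y + qnorm2 z = 1" and V: "sut_form a b c x y z = of_real l"
    and B: "\<And>x' y' z'. quat.Re (sut_form a b c x' y' z') \<le> l * (qnorm2 x' + qnorm2 y' + qnorm2 z')"
  shows "a * y + b * z = of_real (2 * l) * x" "qcnj a * x + c * z = of_real (2 * l) * y"
    "qcnj b * x + qcnj c * y = of_real (2 * l) * z"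
proof -
  define g1 where "g1 = a * y + b * z - of_real (2 * l) * x"
  define g2 where "g2 = qcnj a * x + c * z - of_real (2 * l) * y"
  define g3 where "g3 = qcnj b * x + qcnj c * y - of_real (2 * l) * z"
  define S where "S = qnorm2 g1 + qnorm2 g2 + qnorm2 g3"
  define T where "T = quat.Re (qcnj g1 * x) + quat.Re (qcnj g2 * y) + quat.Re (qcnj g3 * z)"
  define R where "R = quat.Re (sut_form a b c g1 g2 g3) - l * S"
  have "t * S + t\<^sup>2 * R \<le> 0" for t
  proof -
    have g: "a * y + b * z = g1 + of_real (2 * l) * x" "qcnj a * x + c * z = g2 + of_real (2 * l) * y"
      "qcnj b * x + qcnj c * y = g3 + of_real (2 * l) * z"
      by (simp_all add: g1_def g2_def g3_def)
    have "quat.Re (sut_form a b c (x + t *\<^sub>R g1) (y + t *\<^sub>R g2) (z + t *\<^sub>R g3))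
        = l + t * (S + 2 * l * T) + t\<^sup>2 * quat.Re (sut_form a b c g1 g2 g3)"
      unfolding Re_sut_form_add_scaleR g Re_qcnj_mult_add V by (simp add: S_def T_def algebra_simps)
    moreover have "qnorm2 (x + t *\<^sub>R g1) + qnorm2 (y + t *\<^sub>R g2) + qnorm2 (z + t *\<^sub>R g3) = 1 + 2 * t * T + t\<^sup>2 * S"
      unfolding qnorm2_add_scaleR using N by (simp add: S_def T_def algebra_simps)
    ultimately show ?thesis
      using B[of "x + t *\<^sub>R g1" "y + t *\<^sub>R g2" "z + t *\<^sub>R g3"] by (simp add: R_def algebra_simps)
  qed
  then have "S = 0"
    by (rule quadratic_nonpos_imp_linear_coeff_eq_0)
  then have "qnorm2 g1 = 0 \<and> qnorm2 g2 = 0 \<and> qnorm2 g3 = 0"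
    using qnorm2_nonneg[of g1] qnorm2_nonneg[of g2] qnorm2_nonneg[of g3] unfolding S_def by linarith
  then show "a * y + b * z = of_real (2 * l) * x" "qcnj a * x + c * z = of_real (2 * l) * y"
    "qcnj b * x + qcnj c * y = of_real (2 * l) * z"
    by (simp_all add: g1_def g2_def g3_def)
qed

lemma triple_product_in_Reals_of_pairs:
  assumes "x \<noteq> 0" "y \<noteq> 0" "z \<noteq> 0"
    and "qcnj x * a * y \<in> \<real>" "qcnj y * c * z \<in> \<real>" "qcnj x * b * z \<in> \<real>"
  shows "qcnj b * a * c \<in> \<real>"
proof -
  have "qcnj (qcnj x * b * z) * (qcnj x * a * y) * (qcnj y * c * z) \<in> \<real>"
    using assms(4-6) by (simp add: qcnj_Reals)
  also have "qcnj (qcnj x * b * z) * (qcnj x * a * y) * (qcnj y * c * z)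
      = (qnorm2 x * qnorm2 y) *\<^sub>R (qcnj z * (qcnj b * a * c) * z)"
    by (simp add: qcnj_mult mult.assoc mult_qcnj_left)
  finally show ?thesis
    using assms(1-3) by (simp add: scaleR_in_Reals_iff qcnj_conj_in_Reals_iff)
qed

lemma eigen_system_pairs_in_Reals:
  assumes E1: "a * y + b * z = m * x" and E2: "qcnj a * x + c * z = m * y"
    and E3: "qcnj b * x + qcnj c * y = m * z" and m: "m \<in> \<real>" and V: "sut_form a b c x y z \<in> \<real>"
  shows "qcnj x * a * y \<in> \<real>" "qcnj y * c * z \<in> \<real>" "qcnj x * b * z \<in> \<real>"
proof -
  have "qcnj x * a * y + qcnj x * b * z = qcnj x * m * x"
    using E1 by (simp add: distrib_left mult.assoc flip: E1)
  then have xy_xz: "qcnj x * a * y + qcnj x * b * z \<in> \<real>"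
    using m by (simp add: qcnj_conj_in_Reals)
  have "qcnj x * b + qcnj y * c = qcnj z * m"
    using arg_cong[OF E3, of qcnj] m by (simp add: qcnj_add qcnj_mult qcnj_Reals)
  then have "qcnj x * b * z + qcnj y * c * z = qcnj z * m * z"
    by (metis distrib_right)
  then have xz_yz: "qcnj x * b * z + qcnj y * c * z \<in> \<real>"
    using m by (simp add: qcnj_conj_in_Reals)
  have all: "qcnj x * a * y + qcnj x * b * z + qcnj y * c * z \<in> \<real>"
    using V by (simp add: sut_form_def)
  show "qcnj y * c * z \<in> \<real>"
    using Reals_diff[OF all xy_xz] by simp
  show "qcnj x * a * y \<in> \<real>"
    using Reals_diff[OF all xz_yz] by (simp add: add.assoc)
  then show "qcnj x * b * z \<in> \<real>"
    using Reals_diff[OF xy_xz, of "qcnj x * a * y"] by simp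
qed

lemma eigen_system_imp_triple_product_in_Reals_x_eq_0:
  assumes E1: "a * y + b * z = 0" and E2: "c * z = m * y" and m: "m \<in> \<real>" and nonzero: "y \<noteq> 0 \<or> z \<noteq> 0"
  shows "qcnj b * a * c \<in> \<real>"
proof (cases "z = 0")
  case True
  then have "a * y = 0" "y \<noteq> 0"
    using E1 nonzero by simp_all
  then show ?thesis
    by simp
next
  case False
  have "(a * c + m * b) * z = m * (a * y + b * z)"
    using E2 Reals_quat_commute[OF m] by (simp add: distrib_left distrib_right mult.assoc)
  then have "a * c = - (m * b)"
    using E1 False by (simp add: eq_neg_iff_add_eq_0)
  then have "qcnj b * a * c = qcnj b * (- m) * b"
    by (simp add: mult.assoc)
  then show ?thesis
    using m by (simp add: qcnj_conj_in_Reals)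
qed

lemma eigen_system_imp_triple_product_in_Reals_y_or_z_eq_0:
  assumes E1: "a * y + b * z = m * x" and E2: "qcnj a * x + c * z = m * y"
    and E3: "qcnj b * x + qcnj c * y = m * z" and m: "m \<in> \<real>"
    and "x \<noteq> 0" "y = 0 \<or> z = 0"
  shows "qcnj b * a * c \<in> \<real>"
proof -
  have mc: "m * t = t * m" for t
    using Reals_quat_commute[OF m] .
  consider "y = 0" "z = 0" | "y = 0" "z \<noteq> 0" | "y \<noteq> 0" "z = 0"
    using assms(6) by blast
  then show ?thesis
  proof cases
    case 1
    then have "qcnj a * x = 0"
      using E2 by simp
    with \<open>x \<noteq> 0\<close> show ?thesis
      by simp
  next
    case 2
    have "(qcnj a * b + m * c) * z = m * (qcnj a * x + c * z)"
      using E1 2 mc by (simp add: distrib_left distrib_right mult.assoc flip: E1)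
    then have "qcnj a * b = - (m * c)"
      using E2 2 by (simp add: eq_neg_iff_add_eq_0)
    then have "qcnj (qcnj a * b) = qcnj (- (m * c))"
      by (rule arg_cong)
    then have "qcnj b * a * c = qcnj c * (- m) * c"
      using m by (simp add: qcnj_minus qcnj_mult qcnj_Reals)
    then show ?thesis
      using m by (simp add: qcnj_conj_in_Reals)
  next
    case 3
    have "(qcnj b * a + m * qcnj c) * y = m * (qcnj b * x + qcnj c * y)"
      using E1 3 mc by (simp add: distrib_left distrib_right mult.assoc)
    then have "qcnj b * a = - (m * qcnj c)"
      using E3 3 by (simp add: eq_neg_iff_add_eq_0)
    then have "qcnj b * a * c = qcnj c * (- m) * c"
      by (simp add: mc)
    then show ?thesis
      using m by (simp add: qcnj_conj_in_Reals)
  qed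
qed

lemma eigen_system_imp_triple_product_in_Reals:
  assumes E1: "a * y + b * z = m * x" and E2: "qcnj a * x + c * z = m * y"
    and E3: "qcnj b * x + qcnj c * y = m * z" and m: "m \<in> \<real>" and V: "sut_form a b c x y z \<in> \<real>"
    and nonzero: "x \<noteq> 0 \<or> y \<noteq> 0 \<or> z \<noteq> 0"
  shows "qcnj b * a * c \<in> \<real>"
proof -
  consider "x \<noteq> 0" "y \<noteq> 0" "z \<noteq> 0" | "x = 0" | "x \<noteq> 0" "y = 0 \<or> z = 0"
    by blast
  then show ?thesis
  proof cases
    case 1
    then show ?thesis
      by (rule triple_product_in_Reals_of_pairs[OF _ _ _ eigen_system_pairs_in_Reals[OF assms(1-5)]])
  next
    case 2
    then show ?thesis
      using E1 E2 m nonzero by (intro eigen_system_imp_triple_product_in_Reals_x_eq_0[of a y b z c m]) simp_all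
  next
    case 3
    then show ?thesis
      by (rule eigen_system_imp_triple_product_in_Reals_y_or_z_eq_0[OF E1 E2 E3 m])
  qed
qed

lemma triple_product_in_Reals_if_convex:
  assumes "convex (sut_range a b c)"
  shows "qcnj b * a * c \<in> \<real>"
proof -
  obtain w0 where w0: "w0 \<in> sut_range a b c" and max: "\<And>w. w \<in> sut_range a b c \<Longrightarrow> quat.Re w \<le> quat.Re w0"
    using sut_range_Re_attains_max by blast
  obtain q s where "q \<noteq> 0" "qrot q w0 = quat_of_complex (Complex (quat.Re w0) s)"
    using exists_qrot_to_complex by blast
  then have w1: "quat_of_complex (Complex (quat.Re w0) s) \<in> sut_range a b c"
    using w0 qrot_in_sut_range_iff by metis
  have "Quat 0 0 1 0 \<noteq> 0"
    by (simp add: quat_eq_iff)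
  from sut_range_qrot[OF w1 this]
  have w2: "quat_of_complex (Complex (quat.Re w0) (- s)) \<in> sut_range a b c"
    by (simp add: qrot_j_quat_of_complex complex_cnj)
  have "of_real (quat.Re w0) = (1 / 2 :: real) *\<^sub>R quat_of_complex (Complex (quat.Re w0) s)
      + (1 / 2 :: real) *\<^sub>R quat_of_complex (Complex (quat.Re w0) (- s))"
    by (simp add: quat_eq_iff)
  also have "\<dots> \<in> sut_range a b c"
    using convexD[OF assms w1 w2] by simp
  finally obtain x y z where V: "sut_form a b c x y z = of_real (quat.Re w0)"
    and N: "qnorm2 x + qnorm2 y + qnorm2 z = 1"
    unfolding sut_range_def by auto
  have "x \<noteq> 0 \<or> y \<noteq> 0 \<or> z \<noteq> 0"
    using N by auto
  with sut_form_max_eigen[OF N V sut_form_Re_le[OF max]] V show ?thesis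
    by (intro eigen_system_imp_triple_product_in_Reals[of a y b z "of_real (2 * quat.Re w0)" x c]) simp_all
qed

theorem theorem5p3:
  fixes A :: "nat \<Rightarrow> nat \<Rightarrow> quat"
  assumes "strictly_upper_triangular3 A"
  shows "convex (numrange3 A) \<longleftrightarrow> qcnj (A 1 3) * A 1 2 * A 2 3 \<in> \<real>"
  unfolding numrange3_eq_sut_range[OF assms]
  using sut_range_convex_if_triple_product_in_Reals triple_product_in_Reals_if_convex by blast

end
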